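(* Let $d\ge 1$, $\kappa>0$, and let $\bm{x}_1,\dots,\bm{x}_{l+m}\in\mathcal{H}_d$, where the first $l$ points are designated as landmarks and the remaining $m$ as non-landmarks. Assume the landmarks $\bm{x}_1,\dots,\bm{x}_l$ are not all contained in a single hyperplane of $\mathcal{H}_d$ (i.e., they are not all contained in a $d$-dimensional linear subspace of $\mathbb{R}^{d+1}$; in particular $l\ge d+1$). Let $D=[d_{ij}]$ with $d_{ij}=\mathrm{d}^\kappa_H(\bm{x}_i,\bm{x}_j)$, partitioned as $D=\begin{psmallmatrix} D_L & D_N^\top\\ D_N & D_R\end{psmallmatrix}$ with $D_L\in\mathbb{R}^{l\times l}$ (landmark–landmark distances) and $D_N\in\mathbb{R}^{m\times l}$ (non-landmark–landmark distances). Then the algorithm L-hydra$(D_L,D_N,d,\kappa)$ does not return Null, and the rows $\hat{\bm{x}}_1,\dots,\hat{\bm{x}}_{l+m}$ of the returned matrix $\hat X=\begin{psmallmatrix}\hat X_L\\ \hat X_N\end{psmallmatrix}$ are points of $\mathcal{H}_d$ satisfying $$\mathrm{d}^\kappa_H(\hat{\bm{x}}_i,\hat{\bm{x}}_j)=\mathrm{d}^\kappa_H(\bm{x}_i,\bm{x}_j)\quad\text{for all } i,j=1,\dots,l+m.$$ In fact there is a positive Lorentz matrix $T$ with $\hat X = XT$, where $X$ is the matrix with rows $\bm{x}_1^\top,\dots,\bm{x}_{l+m}^\top$.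
   Context: Lorentz product on $\mathbb{R}^{d+1}$: $\bm{x}\circ\bm{y} = x_1y_1 - (x_2y_2+\dots+x_{d+1}y_{d+1})$. $J=\operatorname{diag}(1,-1,\dots,-1)\in\mathbb{R}^{(d+1)\times(d+1)}$. Hyperboloid: $\mathcal{H}_d=\{\bm{x}\in\mathbb{R}^{d+1}: \bm{x}\circ\bm{x}=1,\ x_1>0\}$. For $\kappa>0$: $\mathrm{d}^\kappa_H(\bm{x},\bm{y})=\frac{1}{\sqrt{\kappa}}\operatorname{arcosh}(\bm{x}\circ\bm{y})$. A positive Lorentz matrix is an invertible $T$ with $T_{11}>0$ and $T^\top JT=TJT^\top=J$. Algorithm L-hydra$(D_L,D_N,d,\kappa)$: input a symmetric $D_L\in\mathbb{R}_{\ge0}^{l\times l}$ with zero diagonal, $D_N\in\mathbb{R}_{\ge 0}^{m\times l}$, an integer $d\ge1$ and $\kappa>0$. Step 1: set $A_L=\cosh(\sqrt{\kappa}D_L)$, $A_N=\cosh(\sqrt{\kappa}D_N)$ (cosh applied entrywise) and take an eigendecomposition $A_L=Q\Lambda Q^\top$ with $Q$ orthogonal, columns $\bm{q}_1,\dots,\bm{q}_l$, and $\Lambda=\operatorname{diag}(\lambda_1,\dots,\lambda_l)$, $\lambda_1\ge\dots\ge\lambda_l$; the sign of $\bm{q}_1$ is chosen so that its entries are positive (Perron vector). Step 2: if $\lambda_{l-d+1},\dots,\lambda_l$ are not all strictly negative (or $l<d+1$), return Null; otherwise set $\hat X_L=\big[\sqrt{\lambda_1}\bm{q}_1,\ \sqrt{-\lambda_{l-d+1}}\bm{q}_{l-d+1},\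 \dots,\ \sqrt{-\lambda_l}\bm{q}_l\big]\in\mathbb{R}^{l\times(d+1)}$. Step 3: set $\hat X_N=A_N\big[\bm{q}_1/\sqrt{\lambda_1},\ -\bm{q}_{l-d+1}/\sqrt{-\lambda_{l-d+1}},\ \dots,\ -\bm{q}_l/\sqrt{-\lambda_l}\big]\in\mathbb{R}^{m\times(d+1)}$. Return $\hat X=\begin{psmallmatrix}\hat X_L\\ \hat X_N\end{psmallmatrix}$. *)

theory Defs
  imports Complex_Main "Jordan_Normal_Form.Matrix"
begin

text \<open>Vectors/matrices are 0-indexed: coordinate 1 of the paper is index 0,
  point x_i of the paper is row (i-1) of X, eigenpair k of the paper is index k-1.\<close>

definition lorentz :: "real vec \<Rightarrow> real vec \<Rightarrow> real" where
  "lorentz x y = x $ 0 * y $ 0 - (\<Sum>k\<in>{1..<dim_vec x}. x $ k * y $ k)"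

definition hyperboloid :: "nat \<Rightarrow> real vec set" where
  "hyperboloid d = {x. dim_vec x = d + 1 \<and> lorentz x x = 1 \<and> x $ 0 > 0}"

definition distH :: "real \<Rightarrow> real vec \<Rightarrow> real vec \<Rightarrow> real" where
  "distH \<kappa> x y = arcosh (lorentz x y) / sqrt \<kappa>"

definition lorentzJ :: "nat \<Rightarrow> real mat" where
  "lorentzJ d = mat (d + 1) (d + 1) (\<lambda>(i, j). if i = j then (if i = 0 then 1 else -1) else 0)"

definition positive_lorentz :: "nat \<Rightarrow> real mat \<Rightarrow> bool" where
  "positive_lorentz d T \<longleftrightarrow> T \<in> carrier_mat (d + 1) (d + 1) \<and> invertible_mat T \<and> T $$ (0, 0) > 0 \<and>
     transpose_mat T * lorentzJ d * T = lorentzJ d \<and> T * lorentzJ d * transpose_mat T = lorentzJ d"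

definition rows_in_hyperplane :: "nat \<Rightarrow> nat \<Rightarrow> real mat \<Rightarrow> bool" where
  "rows_in_hyperplane d l X \<longleftrightarrow>
     (\<exists>w. dim_vec w = d + 1 \<and> w \<noteq> 0\<^sub>v (d + 1) \<and> (\<forall>i<l. w \<bullet> row X i = 0))"

text \<open>Step 1 of L-hydra: entrywise cosh and a valid eigendecomposition
  A_L = Q diag(lam 0, ..., lam (l-1)) Q^T with Q orthogonal, eigenvalues in
  nonincreasing order, and first column (Perron vector) with positive entries.\<close>
definition coshmat :: "real \<Rightarrow> real mat \<Rightarrow> real mat" where
  "coshmat \<kappa> D = mat (dim_row D) (dim_col D) (\<lambda>(i, j). cosh (sqrt \<kappa> * D $$ (i, j)))"

definition lhydra_eigdecomp :: "real \<Rightarrow> real mat \<Rightarrow> real mat \<Rightarrow> (nat \<Rightarrow> real) \<Rightarrow> bool" where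
  "lhydra_eigdecomp \<kappa> DL Q lam \<longleftrightarrow>
     (let l = dim_row DL in
      Q \<in> carrier_mat l l \<and> transpose_mat Q * Q = 1\<^sub>m l \<and> Q * transpose_mat Q = 1\<^sub>m l \<and>
      coshmat \<kappa> DL = Q * mat l l (\<lambda>(i, j). if i = j then lam i else 0) * transpose_mat Q \<and>
      (\<forall>i j. i \<le> j \<and> j < l \<longrightarrow> lam j \<le> lam i) \<and>
      (\<forall>i<l. Q $$ (i, 0) > 0))"

definition lh_idx :: "nat \<Rightarrow> nat \<Rightarrow> nat \<Rightarrow> nat" where
  "lh_idx l d c = (if c = 0 then 0 else l - d - 1 + c)"

definition lh_scale :: "nat \<Rightarrow> nat \<Rightarrow> (nat \<Rightarrow> real) \<Rightarrow> nat \<Rightarrow> real" where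
  "lh_scale l d lam c = (if c = 0 then sqrt (lam 0) else sqrt (- lam (lh_idx l d c)))"

text \<open>Steps 2 and 3 of L-hydra, given the output (Q, lam) of step 1.
  None plays the role of Null.\<close>
definition lhydra :: "real mat \<Rightarrow> real mat \<Rightarrow> nat \<Rightarrow> real \<Rightarrow> real mat \<Rightarrow> (nat \<Rightarrow> real) \<Rightarrow> real mat option" where
  "lhydra DL DN d \<kappa> Q lam =
     (let l = dim_row DL;
          AN = coshmat \<kappa> DN;
          XL = mat l (d + 1) (\<lambda>(i, c). lh_scale l d lam c * Q $$ (i, lh_idx l d c));
          M = mat l (d + 1) (\<lambda>(i, c). (if c = 0 then 1 else -1) * Q $$ (i, lh_idx l d c) / lh_scale l d lam c);
          XN = AN * M
      in if l < d + 1 \<or> \<not> (\<forall>k. l - d \<le> k \<and> k < l \<longrightarrow> lam k < 0) then None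
         else Some (XL @\<^sub>r XN))"

end

theory Submission
  imports Defs "Jordan_Normal_Form.Determinant" "HOL-Analysis.Convex"
begin

text \<open>On the hyperboloid \<open>cosh (\<surd>\<kappa> d\<^sup>\<kappa>\<^sub>H(x, y)) = x \<circ> y\<close>, so \<open>A\<^sub>L = X\<^sub>L J X\<^sub>L\<^sup>T\<close> is the
  Lorentz Gram matrix of the landmarks. The vectors \<open>v\<^sub>k = X\<^sub>L\<^sup>T q\<^sub>k\<close> satisfy
  \<open>v\<^sub>j\<^sup>T J v\<^sub>k = \<lambda>\<^sub>k \<delta>\<^sub>j\<^sub>k\<close>, and since the landmarks span \<open>\<real>\<^sup>d\<^sup>+\<^sup>1\<close> the \<open>v\<^sub>k\<close> with
  \<open>\<lambda>\<^sub>k \<noteq> 0\<close> give a resolution of the identity \<open>\<Sum> v\<^sub>k v\<^sub>k\<^sup>T J / \<lambda>\<^sub>k = I\<close>; its trace shows that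
  exactly \<open>d + 1\<close> eigenvalues are nonzero. Two \<open>J\<close>-orthogonal timelike vectors do not exist,
  so at most one eigenvalue is positive, while \<open>\<lambda>\<^sub>1 > 0\<close> by a Perron argument (positive
  entries, positive eigenvector). Hence the last \<open>d\<close> eigenvalues are negative and L-hydra
  succeeds.

  With \<open>M\<close> the matrix that L-hydra multiplies \<open>A\<^sub>N\<close> by, put \<open>T = J X\<^sub>L\<^sup>T M\<close>. Then
  \<open>X T = (X J X\<^sub>L\<^sup>T) M\<close>, which is the output of L-hydra, and \<open>T\<^sup>T J T = M\<^sup>T A\<^sub>L M = J\<close> by the
  orthonormality of \<open>Q\<close>. So \<open>T\<close> is a positive Lorentz matrix; it preserves the Lorentz
  product, hence the hyperboloid and all distances.\<close>

declare sum.lessThan_Suc [simp del]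

section \<open>The Lorentz form\<close>

definition lsign :: "nat \<Rightarrow> real" where
  "lsign a = (if a = 0 then 1 else -1)"

lemma lsign_square [simp]: "lsign a * lsign a = 1"
  by (simp add: lsign_def)

lemma lsign_nonzero [simp]: "lsign a \<noteq> 0"
  by (simp add: lsign_def)

definition lorentz_form :: "nat \<Rightarrow> (nat \<Rightarrow> real) \<Rightarrow> (nat \<Rightarrow> real) \<Rightarrow> real" where
  "lorentz_form d u v = (\<Sum>a<Suc d. lsign a * u a * v a)"

lemma lorentz_eq_lorentz_form:
  assumes "dim_vec u = Suc d" "dim_vec v = Suc d"
  shows "lorentz u v = lorentz_form d (($) u) (($) v)"
proof -
  have "lorentz_form d (($) u) (($) v) = u $ 0 * v $ 0 - (\<Sum>a<d. u $ Suc a * v $ Suc a)"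
    unfolding lorentz_form_def
    by (subst sum.lessThan_Suc_shift) (simp add: lsign_def sum_negf)
  also have "(\<Sum>a<d. u $ Suc a * v $ Suc a) = (\<Sum>k\<in>{1..<Suc d}. u $ k * v $ k)"
    using sum.shift_bounds_Suc_ivl[of "\<lambda>k. u $ k * v $ k" 0 d] by (simp add: atLeast0LessThan)
  finally show ?thesis
    unfolding lorentz_def assms by simp
qed

lemma lorentz_form_nonpos:
  assumes "u 0 = 0"
  shows "lorentz_form d u u \<le> 0"
  unfolding lorentz_form_def by (rule sum_nonpos) (auto simp: lsign_def assms)

lemma lorentz_form_diff:
  "lorentz_form d (\<lambda>a. \<alpha> * v a - \<beta> * w a) (\<lambda>a. \<alpha> * v a - \<beta> * w a)
     = \<alpha>\<^sup>2 * lorentz_form d v v - 2 * \<alpha> * \<beta> * lorentz_form d v w + \<beta>\<^sup>2 * lorentz_form d w w"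
  unfolding lorentz_form_def
  by (simp add: power2_eq_square algebra_simps sum.distrib sum_subtractf sum_distrib_left)

lemma lorentz_form_timelike_not_orthogonal:
  assumes v: "0 < lorentz_form d v v" and w: "0 < lorentz_form d w w"
  shows "lorentz_form d v w \<noteq> 0"
proof
  assume "lorentz_form d v w = 0"
  then have "lorentz_form d (\<lambda>a. w 0 * v a - v 0 * w a) (\<lambda>a. w 0 * v a - v 0 * w a)
      = (w 0)\<^sup>2 * lorentz_form d v v + (v 0)\<^sup>2 * lorentz_form d w w"
    by (simp add: lorentz_form_diff)
  moreover have "lorentz_form d (\<lambda>a. w 0 * v a - v 0 * w a) (\<lambda>a. w 0 * v a - v 0 * w a) \<le> 0"
    by (rule lorentz_form_nonpos) simp
  ultimately have "(v 0)\<^sup>2 * lorentz_form d w w = 0"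
    using v w by (smt (verit) mult_nonneg_nonneg zero_le_power2)
  then have "v 0 = 0"
    using w by simp
  then show False
    using lorentz_form_nonpos[of v d] v by simp
qed

lemma one_plus_abs_square_le:
  fixes A B C :: real
  assumes "0 \<le> A" "0 \<le> B" "C\<^sup>2 \<le> A * B"
  shows "(1 + \<bar>C\<bar>)\<^sup>2 \<le> (1 + A) * (1 + B)"
proof -
  have "(2 * \<bar>C\<bar>)\<^sup>2 = 4 * C\<^sup>2"
    by (simp add: power_mult_distrib)
  also have "\<dots> \<le> 4 * (A * B) + (A - B)\<^sup>2"
    using assms(3) zero_le_power2[of "A - B"] by linarith
  also have "\<dots> = (A + B)\<^sup>2"
    by (simp add: power2_eq_square algebra_simps)
  finally have "(2 * \<bar>C\<bar>)\<^sup>2 \<le> (A + B)\<^sup>2" .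
  then have "2 * \<bar>C\<bar> \<le> A + B"
    by (rule power2_le_imp_le) (use assms(1,2) in simp)
  moreover have "(1 + \<bar>C\<bar>)\<^sup>2 = 1 + 2 * \<bar>C\<bar> + C\<^sup>2"
    by (simp add: power2_eq_square algebra_simps)
  moreover have "(1 + A) * (1 + B) = 1 + (A + B) + A * B"
    by (simp add: algebra_simps)
  ultimately show ?thesis
    using assms(3) by linarith
qed

lemma lorentz_hyperboloid_ge_1:
  assumes "u \<in> hyperboloid d" "v \<in> hyperboloid d"
  shows "1 \<le> lorentz u v"
proof -
  define A where "A = (\<Sum>k\<in>{1..<Suc d}. (u $ k)\<^sup>2)"
  define B where "B = (\<Sum>k\<in>{1..<Suc d}. (v $ k)\<^sup>2)"
  define C where "C = (\<Sum>k\<in>{1..<Suc d}. u $ k * v $ k)"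
  have du: "dim_vec u = Suc d" and dv: "dim_vec v = Suc d"
    and u0: "0 < u $ 0" and v0: "0 < v $ 0" and "lorentz u u = 1" "lorentz v v = 1"
    using assms by (auto simp: hyperboloid_def)
  then have "(u $ 0)\<^sup>2 = 1 + A" "(v $ 0)\<^sup>2 = 1 + B"
    unfolding lorentz_def A_def B_def by (simp_all add: power2_eq_square)
  moreover have "C\<^sup>2 \<le> A * B"
    unfolding A_def B_def C_def by (rule Cauchy_Schwarz_ineq_sum)
  moreover have "0 \<le> A" "0 \<le> B"
    unfolding A_def B_def by (simp_all add: sum_nonneg)
  ultimately have "(1 + \<bar>C\<bar>)\<^sup>2 \<le> (u $ 0 * v $ 0)\<^sup>2"
    by (simp add: power_mult_distrib one_plus_abs_square_le)
  then have "1 + \<bar>C\<bar> \<le> u $ 0 * v $ 0"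
    by (rule power2_le_imp_le) (use u0 v0 in simp)
  moreover have "lorentz u v = u $ 0 * v $ 0 - C"
    unfolding lorentz_def C_def du by simp
  ultimately show ?thesis
    by linarith
qed

section \<open>Lorentz matrices\<close>

lemma lorentzJ_carrier [simp]: "lorentzJ d \<in> carrier_mat (Suc d) (Suc d)"
  by (simp add: lorentzJ_def)

lemma lorentzJ_dim [simp]: "dim_row (lorentzJ d) = Suc d" "dim_col (lorentzJ d) = Suc d"
  by (simp_all add: lorentzJ_def)

lemma lorentzJ_index:
  "i < Suc d \<Longrightarrow> j < Suc d \<Longrightarrow> lorentzJ d $$ (i, j) = (if i = j then lsign i else 0)"
  by (simp add: lorentzJ_def lsign_def)

lemma mult_lorentzJ_index:
  assumes "A \<in> carrier_mat r (Suc d)" "i < r" "j < Suc d"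
  shows "(A * lorentzJ d) $$ (i, j) = A $$ (i, j) * lsign j"
proof -
  have "(A * lorentzJ d) $$ (i, j) = (\<Sum>k<Suc d. A $$ (i, k) * lorentzJ d $$ (k, j))"
    using assms by (simp add: scalar_prod_def atLeast0LessThan)
  also have "\<dots> = (\<Sum>k<Suc d. if k = j then A $$ (i, j) * lsign j else 0)"
    by (rule sum.cong) (auto simp: lorentzJ_index assms)
  finally show ?thesis
    using assms by simp
qed

lemma lorentzJ_square: "lorentzJ d * lorentzJ d = 1\<^sub>m (Suc d)"
proof (rule eq_matI)
  fix i j
  assume "i < dim_row (1\<^sub>m (Suc d) :: real mat)" "j < dim_col (1\<^sub>m (Suc d) :: real mat)"
  then show "(lorentzJ d * lorentzJ d) $$ (i, j) = 1\<^sub>m (Suc d) $$ (i, j)"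
    by (subst mult_lorentzJ_index[OF lorentzJ_carrier]) (auto simp: lorentzJ_index)
qed simp_all

lemma lorentzJ_mult_vec:
  assumes "v \<in> carrier_vec (Suc d)"
  shows "lorentzJ d *\<^sub>v v = vec (Suc d) (\<lambda>a. lsign a * v $ a)"
proof (rule eq_vecI)
  fix a
  assume a: "a < dim_vec (vec (Suc d) (\<lambda>a. lsign a * v $ a))"
  then have "(lorentzJ d *\<^sub>v v) $ a = (\<Sum>k<Suc d. lorentzJ d $$ (a, k) * v $ k)"
    using assms by (simp add: scalar_prod_def atLeast0LessThan)
  also have "\<dots> = (\<Sum>k<Suc d. if k = a then lsign a * v $ a else 0)"
    using a by (intro sum.cong) (auto simp: lorentzJ_index)
  finally show "(lorentzJ d *\<^sub>v v) $ a = vec (Suc d) (\<lambda>a. lsign a * v $ a) $ a"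
    using a by simp
qed simp

lemma lorentz_eq_scalar_prod:
  assumes "u \<in> carrier_vec (Suc d)" "v \<in> carrier_vec (Suc d)"
  shows "lorentz u v = u \<bullet> (lorentzJ d *\<^sub>v v)"
  using assms
  by (simp add: lorentz_eq_lorentz_form lorentz_form_def lorentzJ_mult_vec scalar_prod_def
      atLeast0LessThan mult_ac)

lemma involution_congruence_transpose:
  fixes J A :: "'a::field mat"
  assumes J: "J \<in> carrier_mat n n" "J * J = 1\<^sub>m n" and A: "A \<in> carrier_mat n n"
    and congr: "transpose_mat A * J * A = J"
  shows "invertible_mat A" and "A * J * transpose_mat A = J"
proof -
  define B where "B = J * transpose_mat A * J"
  have B: "B \<in> carrier_mat n n"
    using J A by (simp add: B_def)
  have BA: "B * A = 1\<^sub>m n"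
  proof -
    have "B * A = J * (transpose_mat A * J * A)"
      using J A by (simp add: B_def assoc_mult_mat[of _ n n _ n _ n])
    then show ?thesis
      using congr J by simp
  qed
  then have AB: "A * B = 1\<^sub>m n"
    by (rule mat_mult_left_right_inverse[OF B A])
  then show "invertible_mat A"
    using A B BA by (auto simp: invertible_mat_def inverts_mat_def)
  have "A * J * transpose_mat A = A * B * J"
    using J A by (simp add: B_def assoc_mult_mat[of _ n n _ n _ n])
  then show "A * J * transpose_mat A = J"
    using AB J by simp
qed

lemma row_mult_eq_transpose_mult_vec:
  fixes A B :: "'a::comm_semiring_0 mat"
  assumes "A \<in> carrier_mat r n" "B \<in> carrier_mat n c" "i < r"
  shows "row (A * B) i = transpose_mat B *\<^sub>v row A i"
proof (rule eq_vecI)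
  fix j
  assume "j < dim_vec (transpose_mat B *\<^sub>v row A i)"
  then have "j < c"
    using assms by simp
  moreover have "row A i \<bullet> col B j = col B j \<bullet> row A i"
    by (rule comm_scalar_prod[of _ n]) (use assms \<open>j < c\<close> in auto)
  ultimately show "row (A * B) i $ j = (transpose_mat B *\<^sub>v row A i) $ j"
    using assms by simp
qed (use assms in simp)

lemma lorentz_transpose_mult_vec:
  assumes T: "T \<in> carrier_mat (Suc d) (Suc d)" "T * lorentzJ d * transpose_mat T = lorentzJ d"
    and u: "u \<in> carrier_vec (Suc d)" and v: "v \<in> carrier_vec (Suc d)"
  shows "lorentz (transpose_mat T *\<^sub>v u) (transpose_mat T *\<^sub>v v) = lorentz u v"
proof -
  have Tt: "transpose_mat T \<in> carrier_mat (Suc d) (Suc d)"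
    using T by simp
  have Tv: "transpose_mat T *\<^sub>v v \<in> carrier_vec (Suc d)"
    using mult_mat_vec_carrier[OF Tt v] .
  have JTv: "lorentzJ d *\<^sub>v (transpose_mat T *\<^sub>v v) \<in> carrier_vec (Suc d)"
    using mult_mat_vec_carrier[OF lorentzJ_carrier Tv] .
  have "lorentz (transpose_mat T *\<^sub>v u) (transpose_mat T *\<^sub>v v)
      = (transpose_mat T *\<^sub>v u) \<bullet> (lorentzJ d *\<^sub>v (transpose_mat T *\<^sub>v v))"
    using mult_mat_vec_carrier[OF Tt u] Tv by (rule lorentz_eq_scalar_prod)
  also have "\<dots> = u \<bullet> (T *\<^sub>v (lorentzJ d *\<^sub>v (transpose_mat T *\<^sub>v v)))"
    using T(1) JTv u by (rule transpose_vec_mult_scalar)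
  also have "T *\<^sub>v (lorentzJ d *\<^sub>v (transpose_mat T *\<^sub>v v))
      = (T * lorentzJ d * transpose_mat T) *\<^sub>v v"
    by (simp add: assoc_mult_mat_vec[OF T(1) lorentzJ_carrier Tv]
        assoc_mult_mat_vec[OF mult_carrier_mat[OF T(1) lorentzJ_carrier] Tt v])
  finally show ?thesis
    using T(2) u v by (simp add: lorentz_eq_scalar_prod)
qed

lemma transpose_lorentzJ_mult_index:
  assumes "T \<in> carrier_mat (Suc d) (Suc d)" "b < Suc d" "c < Suc d"
  shows "(transpose_mat T * lorentzJ d * T) $$ (b, c)
    = lorentz_form d (\<lambda>a. T $$ (a, b)) (\<lambda>a. T $$ (a, c))"
proof -
  have "(transpose_mat T * lorentzJ d * T) $$ (b, c)
      = (\<Sum>a<Suc d. (transpose_mat T * lorentzJ d) $$ (b, a) * T $$ (a, c))"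
    using assms by (simp add: scalar_prod_def atLeast0LessThan)
  also have "\<dots> = (\<Sum>a<Suc d. T $$ (a, b) * lsign a * T $$ (a, c))"
  proof (rule sum.cong)
    fix a
    assume "a \<in> {..<Suc d}"
    then have "(transpose_mat T * lorentzJ d) $$ (b, a) = transpose_mat T $$ (b, a) * lsign a"
      using assms by (intro mult_lorentzJ_index) auto
    then show "(transpose_mat T * lorentzJ d) $$ (b, a) * T $$ (a, c) = T $$ (a, b) * lsign a * T $$ (a, c)"
      using assms \<open>a \<in> {..<Suc d}\<close> by simp
  qed simp
  finally show ?thesis
    unfolding lorentz_form_def by (simp add: mult_ac)
qed

section \<open>Signature of a Lorentz Gram matrix\<close>

locale lorentz_gram_spectral =
  fixes d l :: nat and x :: "nat \<Rightarrow> nat \<Rightarrow> real" and Q :: "real mat" and lam :: "nat \<Rightarrow> real"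
  assumes Q_carrier: "Q \<in> carrier_mat l l"
    and Q_orthogonal: "transpose_mat Q * Q = 1\<^sub>m l" "Q * transpose_mat Q = 1\<^sub>m l"
    and gram_decomp: "mat l l (\<lambda>(i, j). lorentz_form d (x i) (x j))
      = Q * mat l l (\<lambda>(i, j). if i = j then lam i else 0) * transpose_mat Q"
    and rows_span: "\<And>w a. (\<And>i. i < l \<Longrightarrow> (\<Sum>b<Suc d. w b * x i b) = 0) \<Longrightarrow> a < Suc d \<Longrightarrow> w a = 0"
begin

lemma Q_rows_orthonormal:
  assumes "i < l" "j < l"
  shows "(\<Sum>k<l. Q $$ (i, k) * Q $$ (j, k)) = (if i = j then 1 else 0)"
proof -
  have "(Q * transpose_mat Q) $$ (i, j) = (if i = j then 1 else 0)"
    using Q_orthogonal assms by simp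
  then show ?thesis
    using Q_carrier assms by (simp add: scalar_prod_def atLeast0LessThan)
qed

lemma Q_cols_orthonormal:
  assumes "i < l" "j < l"
  shows "(\<Sum>k<l. Q $$ (k, i) * Q $$ (k, j)) = (if i = j then 1 else 0)"
proof -
  have "(transpose_mat Q * Q) $$ (i, j) = (if i = j then 1 else 0)"
    using Q_orthogonal assms by simp
  then show ?thesis
    using Q_carrier assms by (simp add: scalar_prod_def atLeast0LessThan)
qed

lemma gram_eigen:
  assumes "i < l" "k < l"
  shows "(\<Sum>j<l. lorentz_form d (x i) (x j) * Q $$ (j, k)) = lam k * Q $$ (i, k)"
proof -
  define D where "D = mat l l (\<lambda>(i, j). if i = j then lam i else 0)"
  have D: "D \<in> carrier_mat l l"
    by (simp add: D_def)
  have "mat l l (\<lambda>(i, j). lorentz_form d (x i) (x j)) * Q = Q * D * (transpose_mat Q * Q)"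
    using Q_carrier D by (simp add: gram_decomp[folded D_def] assoc_mult_mat[of _ l l _ l _ l])
  also have "\<dots> = Q * D"
    using Q_carrier D by (simp add: Q_orthogonal)
  finally have "(mat l l (\<lambda>(i, j). lorentz_form d (x i) (x j)) * Q) $$ (i, k) = (Q * D) $$ (i, k)"
    by simp
  moreover have "(Q * D) $$ (i, k) = (\<Sum>j<l. Q $$ (i, j) * D $$ (j, k))"
    using Q_carrier D assms by (simp add: scalar_prod_def atLeast0LessThan)
  moreover have "\<dots> = (\<Sum>j<l. if j = k then Q $$ (i, k) * lam k else 0)"
    using assms by (intro sum.cong) (auto simp: D_def)
  ultimately show ?thesis
    using Q_carrier assms by (simp add: scalar_prod_def atLeast0LessThan mult.commute)
qed

definition v :: "nat \<Rightarrow> nat \<Rightarrow> real" where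
  "v k a = (\<Sum>i<l. x i a * Q $$ (i, k))"

lemma lorentz_form_row_v:
  assumes "i < l" "k < l"
  shows "lorentz_form d (x i) (v k) = lam k * Q $$ (i, k)"
proof -
  have "lorentz_form d (x i) (v k) = (\<Sum>b<Suc d. \<Sum>j<l. lsign b * x i b * x j b * Q $$ (j, k))"
    unfolding lorentz_form_def v_def by (simp add: sum_distrib_left mult_ac)
  also have "\<dots> = (\<Sum>j<l. lorentz_form d (x i) (x j) * Q $$ (j, k))"
    unfolding lorentz_form_def by (subst sum.swap) (simp add: sum_distrib_right)
  finally show ?thesis
    using gram_eigen assms by simp
qed

lemma lorentz_form_v:
  assumes "j < l" "k < l"
  shows "lorentz_form d (v j) (v k) = (if j = k then lam k else 0)"
proof -
  have "lorentz_form d (v j) (v k) = (\<Sum>a<Suc d. \<Sum>i<l. Q $$ (i, j) * (lsign a * x i a * v k a))"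
    unfolding lorentz_form_def v_def[of j] by (simp add: sum_distrib_left sum_distrib_right mult_ac)
  also have "\<dots> = (\<Sum>i<l. Q $$ (i, j) * lorentz_form d (x i) (v k))"
    unfolding lorentz_form_def by (subst sum.swap) (simp add: sum_distrib_left)
  also have "\<dots> = lam k * (\<Sum>i<l. Q $$ (i, j) * Q $$ (i, k))"
    using assms by (simp add: lorentz_form_row_v sum_distrib_left mult_ac)
  finally show ?thesis
    using Q_cols_orthonormal assms by simp
qed

lemma v_eq_0:
  assumes "k < l" "lam k = 0" "a < Suc d"
  shows "v k a = 0"
proof -
  have "lsign a * v k a = 0"
  proof (rule rows_span[where w = "\<lambda>b. lsign b * v k b"])
    fix i
    assume "i < l"
    then show "(\<Sum>b<Suc d. lsign b * v k b * x i b) = 0"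
      using lorentz_form_row_v[of i k] assms unfolding lorentz_form_def by (simp add: mult_ac)
  qed (use assms in simp)
  then show ?thesis
    by simp
qed

lemma positive_eigenvalue_unique:
  assumes "j < l" "k < l" "0 < lam j" "0 < lam k"
  shows "j = k"
  using lorentz_form_timelike_not_orthogonal[of d "v j" "v k"] lorentz_form_v assms
  by (metis (full_types))

definition nonzero_eigs :: "nat set" where
  "nonzero_eigs = {k. k < l \<and> lam k \<noteq> 0}"

lemma row_expansion:
  assumes "i < l" "a < Suc d"
  shows "x i a = (\<Sum>k\<in>nonzero_eigs. v k a * lorentz_form d (x i) (v k) / lam k)"
proof -
  have "x i a = (\<Sum>j<l. x j a * (if i = j then 1 else 0))"
    using assms by (simp add: if_distrib cong: if_cong)
  also have "\<dots> = (\<Sum>j<l. \<Sum>k<l. x j a * (Q $$ (i, k) * Q $$ (j, k)))"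
    using assms by (intro sum.cong) (simp_all add: Q_rows_orthonormal flip: sum_distrib_left)
  also have "\<dots> = (\<Sum>k<l. Q $$ (i, k) * v k a)"
    unfolding v_def by (subst sum.swap) (simp add: sum_distrib_left mult_ac)
  also have "\<dots> = (\<Sum>k\<in>nonzero_eigs. Q $$ (i, k) * v k a)"
    by (rule sum.mono_neutral_right) (auto simp: nonzero_eigs_def v_eq_0 assms)
  also have "\<dots> = (\<Sum>k\<in>nonzero_eigs. v k a * lorentz_form d (x i) (v k) / lam k)"
    by (rule sum.cong) (auto simp: nonzero_eigs_def lorentz_form_row_v assms)
  finally show ?thesis .
qed

lemma lorentz_resolution_of_identity:
  assumes "a < Suc d" "b < Suc d"
  shows "(\<Sum>k\<in>nonzero_eigs. v k a * lsign b * v k b / lam k) = (if a = b then 1 else 0)"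
proof -
  let ?P = "\<lambda>b. \<Sum>k\<in>nonzero_eigs. v k a * lsign b * v k b / lam k"
  have "(if a = b then 1 else 0) - ?P b = 0"
  proof (rule rows_span[where w = "\<lambda>b. (if a = b then 1 else 0) - ?P b", OF _ assms(2)])
    fix i
    assume i: "i < l"
    have "(\<Sum>b<Suc d. ?P b * x i b)
        = (\<Sum>k\<in>nonzero_eigs. \<Sum>b<Suc d. v k a * lsign b * v k b / lam k * x i b)"
      by (subst sum.swap) (simp add: sum_distrib_right)
    also have "\<dots> = (\<Sum>k\<in>nonzero_eigs. v k a * lorentz_form d (x i) (v k) / lam k)"
      unfolding lorentz_form_def by (simp add: sum_distrib_left sum_divide_distrib mult_ac)
    also have "\<dots> = x i a"
      using row_expansion[OF i assms(1)] by simp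
    finally have "(\<Sum>b<Suc d. ?P b * x i b) = x i a" .
    moreover have "(\<Sum>b<Suc d. (if a = b then 1 else 0) * x i b) = (\<Sum>b<Suc d. if a = b then x i b else 0)"
      by (rule sum.cong) auto
    moreover have "\<dots> = x i a"
      using assms by simp
    ultimately show "(\<Sum>b<Suc d. ((if a = b then 1 else 0) - ?P b) * x i b) = 0"
      by (simp add: left_diff_distrib sum_subtractf)
  qed
  then show ?thesis
    by simp
qed

lemma card_nonzero_eigs: "card nonzero_eigs = Suc d"
proof -
  have "real (Suc d) = (\<Sum>a<Suc d. \<Sum>k\<in>nonzero_eigs. v k a * lsign a * v k a / lam k)"
    by (simp add: lorentz_resolution_of_identity)
  also have "\<dots> = (\<Sum>k\<in>nonzero_eigs. lorentz_form d (v k) (v k) / lam k)"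
    unfolding lorentz_form_def by (subst sum.swap) (simp add: sum_divide_distrib mult_ac)
  also have "\<dots> = (\<Sum>k\<in>nonzero_eigs. 1)"
    by (rule sum.cong) (auto simp: nonzero_eigs_def lorentz_form_v)
  finally show ?thesis
    by simp
qed

lemma Suc_d_le_l: "Suc d \<le> l"
proof -
  have "card nonzero_eigs \<le> card {..<l}"
    by (rule card_mono) (auto simp: nonzero_eigs_def)
  then show ?thesis
    by (simp add: card_nonzero_eigs)
qed

end

lemma sorted_eigenvalues_tail_negative:
  fixes lam :: "nat \<Rightarrow> real"
  assumes sorted: "\<And>i j. i \<le> j \<Longrightarrow> j < l \<Longrightarrow> lam j \<le> lam i"
    and pos: "0 < lam 0"
    and pos_unique: "\<And>j k. j < l \<Longrightarrow> k < l \<Longrightarrow> 0 < lam j \<Longrightarrow> 0 < lam k \<Longrightarrow> j = k"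
    and card: "card {k. k < l \<and> lam k \<noteq> 0} = Suc d"
    and k: "l - d \<le> k" "k < l"
  shows "lam k < 0"
proof (rule ccontr)
  assume "\<not> lam k < 0"
  then have "{k. k < l \<and> lam k \<noteq> 0} \<subseteq> insert 0 {k<..<l}"
    using sorted[of _ k] pos_unique[of _ 0] pos k(2) by (force simp: not_less)
  then have "Suc d \<le> card (insert 0 {k<..<l})"
    unfolding card[symmetric] by (rule card_mono[rotated]) simp
  also have "\<dots> \<le> Suc (l - Suc k)"
    by (simp add: card_insert_if)
  finally show False
    using k by linarith
qed

section \<open>The L-hydra embedding\<close>

lemma coshmat_distH:
  assumes "0 < \<kappa>" "\<And>i. i < r \<Longrightarrow> f i \<in> hyperboloid d" "\<And>j. j < s \<Longrightarrow> g j \<in> hyperboloid d"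
  shows "coshmat \<kappa> (mat r s (\<lambda>(i, j). distH \<kappa> (f i) (g j))) = mat r s (\<lambda>(i, j). lorentz (f i) (g j))"
proof (rule eq_matI)
  fix i j
  assume "i < dim_row (mat r s (\<lambda>(i, j). lorentz (f i) (g j)))"
    and "j < dim_col (mat r s (\<lambda>(i, j). lorentz (f i) (g j)))"
  then have "1 \<le> lorentz (f i) (g j)"
    using assms(2,3) by (auto intro!: lorentz_hyperboloid_ge_1[where d = d])
  then show "coshmat \<kappa> (mat r s (\<lambda>(i, j). distH \<kappa> (f i) (g j))) $$ (i, j)
      = mat r s (\<lambda>(i, j). lorentz (f i) (g j)) $$ (i, j)"
    using assms(1) \<open>i < _\<close> \<open>j < _\<close> by (simp add: coshmat_def distH_def)
qed (simp_all add: coshmat_def)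

locale lhydra_data =
  fixes d l m :: nat and \<kappa> :: real and X Q :: "real mat" and lam :: "nat \<Rightarrow> real"
  assumes kappa_pos: "0 < \<kappa>"
    and X_carrier: "X \<in> carrier_mat (l + m) (d + 1)"
    and X_hyperboloid: "\<And>i. i < l + m \<Longrightarrow> row X i \<in> hyperboloid d"
    and landmarks_not_in_hyperplane: "\<not> rows_in_hyperplane d l X"
    and eigdecomp: "lhydra_eigdecomp \<kappa> (mat l l (\<lambda>(i, j). distH \<kappa> (row X i) (row X j))) Q lam"
begin

lemma X_dim [simp]: "dim_row X = l + m" "dim_col X = Suc d"
  using X_carrier by auto

lemma X_carrier_Suc: "X \<in> carrier_mat (l + m) (Suc d)"
  using X_carrier by simp

lemma lorentz_rows:
  "i < l + m \<Longrightarrow> j < l + m \<Longrightarrow> lorentz (row X i) (row X j) = lorentz_form d (($) (row X i)) (($) (row X j))"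
  by (simp add: lorentz_eq_lorentz_form)

lemma lorentz_rows_ge_1: "i < l + m \<Longrightarrow> j < l + m \<Longrightarrow> 1 \<le> lorentz (row X i) (row X j)"
  by (rule lorentz_hyperboloid_ge_1[where d = d]) (simp_all add: X_hyperboloid)

lemma
  shows Q_carrier: "Q \<in> carrier_mat l l"
    and Q_orthogonal: "transpose_mat Q * Q = 1\<^sub>m l" "Q * transpose_mat Q = 1\<^sub>m l"
    and gram_decomp: "mat l l (\<lambda>(i, j). lorentz (row X i) (row X j))
      = Q * mat l l (\<lambda>(i, j). if i = j then lam i else 0) * transpose_mat Q"
    and lam_sorted: "\<And>i j. i \<le> j \<Longrightarrow> j < l \<Longrightarrow> lam j \<le> lam i"
    and Q_first_col_pos: "\<And>i. i < l \<Longrightarrow> 0 < Q $$ (i, 0)"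
proof -
  have "coshmat \<kappa> (mat l l (\<lambda>(i, j). distH \<kappa> (row X i) (row X j)))
      = mat l l (\<lambda>(i, j). lorentz (row X i) (row X j))"
    by (rule coshmat_distH[where d = d]) (simp_all add: kappa_pos X_hyperboloid)
  with eigdecomp show "Q \<in> carrier_mat l l" "transpose_mat Q * Q = 1\<^sub>m l" "Q * transpose_mat Q = 1\<^sub>m l"
    "mat l l (\<lambda>(i, j). lorentz (row X i) (row X j))
      = Q * mat l l (\<lambda>(i, j). if i = j then lam i else 0) * transpose_mat Q"
    "\<And>i j. i \<le> j \<Longrightarrow> j < l \<Longrightarrow> lam j \<le> lam i" "\<And>i. i < l \<Longrightarrow> 0 < Q $$ (i, 0)"
    unfolding lhydra_eigdecomp_def Let_def by auto
qed

sublocale lorentz_gram_spectral d l "\<lambda>i. ($) (row X i)" Q lam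
proof
  show "mat l l (\<lambda>(i, j). lorentz_form d (($) (row X i)) (($) (row X j)))
      = Q * mat l l (\<lambda>(i, j). if i = j then lam i else 0) * transpose_mat Q"
    unfolding gram_decomp[symmetric] by (rule eq_matI) (simp_all add: lorentz_rows)
next
  fix w :: "nat \<Rightarrow> real" and a
  assume w: "\<And>i. i < l \<Longrightarrow> (\<Sum>b<Suc d. w b * row X i $ b) = 0" and a: "a < Suc d"
  show "w a = 0"
  proof (rule ccontr)
    assume "w a \<noteq> 0"
    then have "vec (Suc d) w \<noteq> 0\<^sub>v (Suc d)"
      using a by (metis index_vec index_zero_vec(1))
    moreover have "vec (Suc d) w \<bullet> row X i = 0" if "i < l" for i
      using w[OF that] that by (simp add: scalar_prod_def atLeast0LessThan)
    ultimately have "rows_in_hyperplane d l X"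
      unfolding rows_in_hyperplane_def by (intro exI[of _ "vec (Suc d) w"]) simp
    then show False
      using landmarks_not_in_hyperplane by simp
  qed
qed (use Q_carrier Q_orthogonal in simp_all)

lemma landmarks_nonempty: "0 < l"
  using Suc_d_le_l by simp

lemma lam_0_pos: "0 < lam 0"
proof -
  note l = landmarks_nonempty
  have "0 < (\<Sum>j<l. lorentz_form d (($) (row X 0)) (($) (row X j)) * Q $$ (j, 0))"
  proof (rule sum_pos)
    fix j
    assume "j \<in> {..<l}"
    then have "1 \<le> lorentz (row X 0) (row X j)" "0 < Q $$ (j, 0)"
      using l lorentz_rows_ge_1 Q_first_col_pos by simp_all
    then show "0 < lorentz_form d (($) (row X 0)) (($) (row X j)) * Q $$ (j, 0)"
      using l \<open>j \<in> {..<l}\<close> by (simp add: lorentz_rows)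
  qed (use l in auto)
  then have "0 < lam 0 * Q $$ (0, 0)"
    using gram_eigen l by simp
  then show ?thesis
    using Q_first_col_pos[OF l] by (simp add: zero_less_mult_iff)
qed

lemma lam_tail_neg: "l - d \<le> k \<Longrightarrow> k < l \<Longrightarrow> lam k < 0"
  using lam_sorted lam_0_pos positive_eigenvalue_unique card_nonzero_eigs[unfolded nonzero_eigs_def]
  by (rule sorted_eigenvalues_tail_negative[where l = l and lam = lam and d = d])

lemma lh_idx_less: "c < Suc d \<Longrightarrow> lh_idx l d c < l"
  using Suc_d_le_l by (auto simp: lh_idx_def)

lemma lh_idx_inj: "c < Suc d \<Longrightarrow> c' < Suc d \<Longrightarrow> lh_idx l d c = lh_idx l d c' \<Longrightarrow> c = c'"
  using Suc_d_le_l by (auto simp: lh_idx_def split: if_splits)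

lemma lsign_lam_lh_idx_pos: "c < Suc d \<Longrightarrow> 0 < lsign c * lam (lh_idx l d c)"
  using lam_0_pos lam_tail_neg[of "lh_idx l d c"] Suc_d_le_l
  by (auto simp: lh_idx_def lsign_def)

lemma lh_scale_eq: "c < Suc d \<Longrightarrow> lh_scale l d lam c = sqrt (lsign c * lam (lh_idx l d c))"
  by (simp add: lh_scale_def lh_idx_def lsign_def)

lemma lh_scale_pos: "c < Suc d \<Longrightarrow> 0 < lh_scale l d lam c"
  by (simp add: lh_scale_eq lsign_lam_lh_idx_pos)

lemma lh_scale_square:
  assumes "c < Suc d"
  shows "lh_scale l d lam c * lh_scale l d lam c = lsign c * lam (lh_idx l d c)"
  using lsign_lam_lh_idx_pos[OF assms] by (simp add: lh_scale_eq[OF assms])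

definition M :: "real mat" where
  "M = mat l (d + 1)
     (\<lambda>(i, c). (if c = 0 then 1 else -1) * Q $$ (i, lh_idx l d c) / lh_scale l d lam c)"

lemma M_dim [simp]: "dim_row M = l" "dim_col M = Suc d"
  by (simp_all add: M_def)

lemma M_index:
  "i < l \<Longrightarrow> c < Suc d \<Longrightarrow> M $$ (i, c) = lsign c / lh_scale l d lam c * Q $$ (i, lh_idx l d c)"
  by (simp add: M_def lsign_def)

lemma gram_mult_M:
  assumes "i < l" "c < Suc d"
  shows "(\<Sum>j<l. lorentz (row X i) (row X j) * M $$ (j, c)) = lh_scale l d lam c * Q $$ (i, lh_idx l d c)"
proof -
  have "(\<Sum>j<l. lorentz (row X i) (row X j) * M $$ (j, c))
      = lsign c / lh_scale l d lam c
        * (\<Sum>j<l. lorentz_form d (($) (row X i)) (($) (row X j)) * Q $$ (j, lh_idx l d c))"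
    using assms by (simp add: M_index lorentz_rows sum_distrib_left mult_ac)
  also have "\<dots> = lsign c * lam (lh_idx l d c) / lh_scale l d lam c * Q $$ (i, lh_idx l d c)"
    using assms by (simp add: gram_eigen lh_idx_less)
  finally show ?thesis
    using lh_scale_pos[OF assms(2)] by (simp add: lh_scale_square[OF assms(2), symmetric])
qed

definition T :: "real mat" where
  "T = mat (d + 1) (d + 1) (\<lambda>(a, c). lsign a * (\<Sum>j<l. row X j $ a * M $$ (j, c)))"

lemma T_carrier: "T \<in> carrier_mat (Suc d) (Suc d)"
  by (simp add: T_def)

lemma X_mult_T_index:
  assumes "i < l + m" "c < Suc d"
  shows "(X * T) $$ (i, c) = (\<Sum>j<l. lorentz (row X i) (row X j) * M $$ (j, c))"
proof -
  have "(X * T) $$ (i, c) = (\<Sum>a<Suc d. \<Sum>j<l. lsign a * row X i $ a * row X j $ a * M $$ (j, c))"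
    using assms by (simp add: T_def scalar_prod_def atLeast0LessThan sum_distrib_left mult_ac)
  also have "\<dots> = (\<Sum>j<l. lorentz_form d (($) (row X i)) (($) (row X j)) * M $$ (j, c))"
    unfolding lorentz_form_def by (subst sum.swap) (simp add: sum_distrib_right)
  finally show ?thesis
    using assms by (simp add: lorentz_rows)
qed

lemma T_congruence_index:
  assumes "b < Suc d" "c < Suc d"
  shows "(transpose_mat T * lorentzJ d * T) $$ (b, c) = (\<Sum>i<l. M $$ (i, b) * (X * T) $$ (i, c))"
proof -
  have "(transpose_mat T * lorentzJ d * T) $$ (b, c) = lorentz_form d (\<lambda>a. T $$ (a, b)) (\<lambda>a. T $$ (a, c))"
    using T_carrier assms by (rule transpose_lorentzJ_mult_index)
  also have "\<dots> = (\<Sum>a<Suc d. \<Sum>i<l. M $$ (i, b) * (row X i $ a * T $$ (a, c)))"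
    unfolding lorentz_form_def
  proof (rule sum.cong)
    fix a
    assume "a \<in> {..<Suc d}"
    then have "lsign a * T $$ (a, b) = (lsign a * lsign a) * (\<Sum>i<l. row X i $ a * M $$ (i, b))"
      using assms by (simp add: T_def)
    then show "lsign a * T $$ (a, b) * T $$ (a, c) = (\<Sum>i<l. M $$ (i, b) * (row X i $ a * T $$ (a, c)))"
      by (simp add: sum_distrib_left sum_distrib_right mult_ac)
  qed simp
  also have "\<dots> = (\<Sum>i<l. M $$ (i, b) * (X * T) $$ (i, c))"
    using assms T_carrier
    by (subst sum.swap) (simp add: scalar_prod_def atLeast0LessThan sum_distrib_left)
  finally show ?thesis .
qed

lemma T_lorentz: "transpose_mat T * lorentzJ d * T = lorentzJ d"
proof (rule eq_matI)
  fix b c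
  assume "b < dim_row (lorentzJ d)" "c < dim_col (lorentzJ d)"
  then have b: "b < Suc d" and c: "c < Suc d"
    by simp_all
  have "(transpose_mat T * lorentzJ d * T) $$ (b, c)
      = (\<Sum>i<l. M $$ (i, b) * (lh_scale l d lam c * Q $$ (i, lh_idx l d c)))"
    using b c by (simp add: T_congruence_index X_mult_T_index gram_mult_M)
  also have "\<dots> = lsign b * lh_scale l d lam c / lh_scale l d lam b
      * (\<Sum>i<l. Q $$ (i, lh_idx l d b) * Q $$ (i, lh_idx l d c))"
    using b by (simp add: M_index sum_distrib_left mult_ac)
  also have "\<dots> = lorentzJ d $$ (b, c)"
    using Q_cols_orthonormal[OF lh_idx_less[OF b] lh_idx_less[OF c]] lh_idx_inj[OF b c]
      lh_scale_pos[OF b] b c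
    by (auto simp: lorentzJ_index)
  finally show "(transpose_mat T * lorentzJ d * T) $$ (b, c) = lorentzJ d $$ (b, c)" .
qed (use T_carrier in simp_all)

lemma M_first_col_pos: "i < l \<Longrightarrow> 0 < M $$ (i, 0)"
  using Q_first_col_pos lam_0_pos by (simp add: M_def lh_scale_def lh_idx_def)

lemma X_mult_T_first_col_pos:
  assumes "i < l + m"
  shows "0 < (X * T) $$ (i, 0)"
proof -
  have "0 < (\<Sum>j<l. lorentz (row X i) (row X j) * M $$ (j, 0))"
  proof (rule sum_pos)
    fix j
    assume "j \<in> {..<l}"
    then show "0 < lorentz (row X i) (row X j) * M $$ (j, 0)"
      using assms lorentz_rows_ge_1[of i j] M_first_col_pos[of j] by simp
  qed (use landmarks_nonempty in auto)
  then show ?thesis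
    using assms by (simp add: X_mult_T_index)
qed

lemma T_00_pos: "0 < T $$ (0, 0)"
proof -
  have "0 < (\<Sum>j<l. row X j $ 0 * M $$ (j, 0))"
  proof (rule sum_pos)
    fix j
    assume "j \<in> {..<l}"
    then show "0 < row X j $ 0 * M $$ (j, 0)"
      using X_hyperboloid[of j] M_first_col_pos[of j] by (simp add: hyperboloid_def)
  qed (use landmarks_nonempty in auto)
  then show ?thesis
    by (simp add: T_def lsign_def)
qed

lemma positive_lorentz_T: "positive_lorentz d T"
  using involution_congruence_transpose[OF lorentzJ_carrier lorentzJ_square T_carrier T_lorentz]
  unfolding positive_lorentz_def using T_carrier T_00_pos T_lorentz by simp

lemma lorentz_rows_X_mult_T:
  assumes "i < l + m" "j < l + m"
  shows "lorentz (row (X * T) i) (row (X * T) j) = lorentz (row X i) (row X j)"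
proof -
  have "row (X * T) k = transpose_mat T *\<^sub>v row X k" if "k < l + m" for k
    using X_carrier_Suc T_carrier that by (rule row_mult_eq_transpose_mult_vec)
  then show ?thesis
    using assms
    by (simp add: row_carrier_vec[OF _ X_carrier_Suc] lorentz_transpose_mult_vec[OF T_carrier
        involution_congruence_transpose(2)[OF lorentzJ_carrier lorentzJ_square T_carrier T_lorentz]])
qed

lemma lhydra_eq:
  "lhydra (mat l l (\<lambda>(i, j). distH \<kappa> (row X i) (row X j)))
      (mat m l (\<lambda>(i, j). distH \<kappa> (row X (l + i)) (row X j))) d \<kappa> Q lam = Some (X * T)"
proof -
  have AN: "coshmat \<kappa> (mat m l (\<lambda>(i, j). distH \<kappa> (row X (l + i)) (row X j)))
      = mat m l (\<lambda>(i, j). lorentz (row X (l + i)) (row X j))"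
    by (rule coshmat_distH[where d = d]) (simp_all add: kappa_pos X_hyperboloid)
  have "mat l (d + 1) (\<lambda>(i, c). lh_scale l d lam c * Q $$ (i, lh_idx l d c))
      @\<^sub>r (mat m l (\<lambda>(i, j). lorentz (row X (l + i)) (row X j)) * M) = X * T"
  proof (rule eq_matI)
    fix i c
    assume "i < dim_row (X * T)" "c < dim_col (X * T)"
    then have i: "i < l + m" and c: "c < Suc d"
      using T_carrier by simp_all
    show "(mat l (d + 1) (\<lambda>(i, c). lh_scale l d lam c * Q $$ (i, lh_idx l d c))
        @\<^sub>r (mat m l (\<lambda>(i, j). lorentz (row X (l + i)) (row X j)) * M)) $$ (i, c) = (X * T) $$ (i, c)"
      using i c
      by (cases "i < l") (simp_all add: append_rows_def X_mult_T_index gram_mult_M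
          scalar_prod_def atLeast0LessThan)
  qed (use T_carrier in \<open>simp_all add: append_rows_def\<close>)
  moreover have "\<not> (l < d + 1 \<or> \<not> (\<forall>k. l - d \<le> k \<and> k < l \<longrightarrow> lam k < 0))"
    using Suc_d_le_l lam_tail_neg by auto
  ultimately show ?thesis
    unfolding lhydra_def Let_def AN M_def by simp
qed

end

theorem theorem1:
  fixes d l m :: nat and \<kappa> :: real and X Q :: "real mat" and lam :: "nat \<Rightarrow> real"
  assumes "d \<ge> 1" and "\<kappa> > 0"
    and "X \<in> carrier_mat (l + m) (d + 1)"
    and "\<forall>i<l + m. row X i \<in> hyperboloid d"
    and "\<not> rows_in_hyperplane d l X"
    and "lhydra_eigdecomp \<kappa> (mat l l (\<lambda>(i, j). distH \<kappa> (row X i) (row X j))) Q lam"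
  shows "\<exists>Xh. lhydra (mat l l (\<lambda>(i, j). distH \<kappa> (row X i) (row X j)))
                     (mat m l (\<lambda>(i, j). distH \<kappa> (row X (l + i)) (row X j))) d \<kappa> Q lam = Some Xh
           \<and> Xh \<in> carrier_mat (l + m) (d + 1)
           \<and> (\<forall>i<l + m. row Xh i \<in> hyperboloid d)
           \<and> (\<forall>i<l + m. \<forall>j<l + m. distH \<kappa> (row Xh i) (row Xh j) = distH \<kappa> (row X i) (row X j))
           \<and> (\<exists>T. positive_lorentz d T \<and> Xh = X * T)"
proof -
  interpret lhydra_data d l m \<kappa> X Q lam
    using assms(2-) by unfold_locales simp_all
  have "row (X * T) i \<in> hyperboloid d" if "i < l + m" for i
    using that lorentz_rows_X_mult_T[OF that that] X_hyperboloid[OF that] X_mult_T_first_col_pos[OF that]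
      T_carrier
    by (simp add: hyperboloid_def)
  moreover have "distH \<kappa> (row (X * T) i) (row (X * T) j) = distH \<kappa> (row X i) (row X j)"
    if "i < l + m" "j < l + m" for i j
    using that by (simp add: distH_def lorentz_rows_X_mult_T)
  ultimately show ?thesis
    using lhydra_eq positive_lorentz_T X_carrier T_carrier by auto
qed

end
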